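(* Let $\overline{\mathcal R}_{Moon}$ be the function obtained from the lunar disturbing function expansion $$\mathcal R_k=\sum_{l\ge 2}\sum_{m,p,s,q=0}^{l}\sum_{j,r\in\mathbb Z}(-1)^{m+s}(-1)^{[m/2]}\frac{\mathcal G m_k\,\epsilon_m\epsilon_s}{2a_k}\frac{(l-s)!}{(l+m)!}\left(\frac{a}{a_k}\right)^{l}F_{lmp}(I)F_{lsq}(I_k)H_{lpj}(e)G_{lqr}(e_k)$$ $$\times\Big\{(-1)^{k_2}U_l^{m,-s}\cos\big(\bar\theta_{lmpj}+\bar\theta'_{lsqr}-y_s\pi\big)+(-1)^{k_3}U_l^{m,s}\cos\big(\bar\theta_{lmpj}-\bar\theta'_{lsqr}-y_s\pi\big)\Big\}$$ by keeping only the terms with $l=2$ and averaging over the mean anomalies $M$ of the point mass and $M_k$ of the Moon (i.e. keeping only the terms with $l-2p+j=0$ and $l-2q+r=0$). Let $\overline{\mathcal R}_{Sun}$ be obtained in the same way from the solar expansion $$\mathcal R^{*}=\mathcal G m^{*}\sum_{l\ge 2}\sum_{m=0}^{l}\sum_{p=0}^{l}\sum_{h=0}^{l}\sum_{q,j\in\mathbb Z}\frac{a^{l}}{(a^{*})^{l+1}}\epsilon_m\frac{(l-m)!}{(l+m)!}F_{lmp}(I)F_{lmh}(I^{*})H_{lpq}(e)G_{lhj}(e^{*})\cos\varphi_{lmphqj},$$ $$\varphi_{lmphqj}=(l-2p)\omega+(l-2p+q)M-(l-2h)\omega^{*}-(l-2h+j)M^{*}+m(\Omega-\Omega^{*}),$$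 by keeping only the terms with $l=2$ and averaging over $M$ and $M^{*}$ (i.e. keeping only terms with $l-2p+q=0$ and $l-2h+j=0$). Then $\overline{\mathcal R}_{Moon}$ does not depend on the argument of perigee $\omega_k$ of the Moon, and $\overline{\mathcal R}_{Sun}$ does not depend on the argument of perigee $\omega^{*}$ of the Sun.
   Context: $a,e,I,\omega,\Omega,M$ are the orbital elements (semi-major axis, eccentricity, inclination, argument of perigee, longitude of ascending node, mean anomaly) of an Earth-orbiting point mass referred to the celestial equator; $a_k,e_k,I_k,\omega_k,\Omega_k,M_k$ are the Moon's elements referred to the ecliptic, $m_k$ its mass; $a^*,e^*,I^*,\omega^*,\Omega^*,M^*$ are the Sun's elements referred to the celestial equator, $m^*$ its mass; $\mathcal G$ is the gravitational constant; $\varepsilon$ is the obliquity of the ecliptic. $\epsilon_m=1$ if $m=0$, $\epsilon_m=2$ otherwise. $\bar\theta_{lmpj}=(l-2p)\omega+(l-2p+j)M+m\Omega$, $\bar\theta'_{lsqr}=(l-2q)\omega_k+(l-2q+r)M_k+s(\Omega_k-\pi/2)$; $y_s=0$ for $s$ even, $1/2$ for $s$ odd; $t=(l-1)\bmod 2$, $k_2=t(m+s-1)+1$, $k_3=t(m+s)$; $U_l^{m,s}=\sum_{r=\max(0,-(m+s))}^{\min(l-s,l-m)}(-1)^{l-m-r}\binom{l+m}{m+s+r}\binom{l-m}{r}\cos^{m+s+2r}(\varepsilon/2)\sin^{-m-s+2(l-r)}(\varepsilon/2)$. Hansen coefficients $X_k^{n,m}(e)$ are defined by $(r/a)^n e^{imf}=\sum_{k\in\mathbb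 Z}X_k^{n,m}(e)e^{ikM}$ ($f$ true anomaly); $H_{lpj}(e)=X^{l,l-2p}_{l-2p+j}(e)$, $G_{lqr}(e')=X^{-(l+1),l-2q}_{l-2q+r}(e')$. $F_{lmp}(I)$ is Kaula's inclination function $F_{lmp}(I)=\sum_{t=0}^{\min\{p,[\frac{l-m}{2}]\}}\frac{(2l-2t)!}{t!(l-t)!(l-m-2t)!2^{2l-2t}}\sin^{l-m-2t}I\sum_{s=0}^{m}\binom{m}{s}\cos^{s}I\sum_{c}\binom{l-m-2t+s}{c}\binom{m-s}{p-t-c}(-1)^{c-[\frac{l-m}{2}]}$, with $[\cdot]$ the integer part and $c$ over all values making the binomials nonzero. *)

theory Defs
  imports "HOL-Analysis.Analysis"
begin

record elements =
  sm_axis :: real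
  ecc :: real
  incl :: real
  arg_per :: real
  long_node :: real
  mean_anom :: real

definition kepler_E :: "real \<Rightarrow> real \<Rightarrow> real" where
  "kepler_E e M = (THE E. E - e * sin E = M)"

definition r_over_a :: "real \<Rightarrow> real \<Rightarrow> real" where
  "r_over_a e M = 1 - e * cos (kepler_E e M)"

definition true_anom :: "real \<Rightarrow> real \<Rightarrow> real" where
  "true_anom e M = Arg (Complex (cos (kepler_E e M) - e)
                                (sqrt (1 - e\<^sup>2) * sin (kepler_E e M)))"

text \<open>Hansen coefficient X_k^{n,m}(e): the k-th Fourier coefficient (in M) of
  (r/a)^n e^{imf}. The coefficients are real; we take the real part.\<close>
definition hansen :: "int \<Rightarrow> int \<Rightarrow> int \<Rightarrow> real \<Rightarrow> real" where
  "hansen n m k e = Re ((1 / (2 * pi)) * integral {0..2 * pi}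
      (\<lambda>M. complex_of_real (r_over_a e M powi n) * cis (of_int m * true_anom e M)
            * cis (- (of_int k * M))))"

definition H_fun :: "nat \<Rightarrow> nat \<Rightarrow> int \<Rightarrow> real \<Rightarrow> real" where
  "H_fun l p j e = hansen (int l) (int l - 2 * int p) (int l - 2 * int p + j) e"

definition G_fun :: "nat \<Rightarrow> nat \<Rightarrow> int \<Rightarrow> real \<Rightarrow> real" where
  "G_fun l q r e = hansen (- (int l + 1)) (int l - 2 * int q) (int l - 2 * int q + r) e"

definition kaula_F :: "nat \<Rightarrow> nat \<Rightarrow> nat \<Rightarrow> real \<Rightarrow> real" where
  "kaula_F l m p I =
    (\<Sum>t = 0..min p ((l - m) div 2).
       fact (2 * l - 2 * t) / (fact t * fact (l - t) * fact (l - m - 2 * t) * 2 ^ (2 * l - 2 * t))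
       * sin I ^ (l - m - 2 * t)
       * (\<Sum>s = 0..m. real (m choose s) * cos I ^ s
           * (\<Sum>c = 0..p - t. real ((l - m - 2 * t + s) choose c)
                * real ((m - s) choose (p - t - c))
                * (-1) powi (int c - int ((l - m) div 2)))))"

definition U_coef :: "nat \<Rightarrow> int \<Rightarrow> int \<Rightarrow> real \<Rightarrow> real" where
  "U_coef l m s \<epsilon> =
    (\<Sum>r = max 0 (- (m + s)) .. min (int l - s) (int l - m).
       (-1) powi (int l - m - r)
       * real (nat (int l + m) choose nat (m + s + r))
       * real (nat (int l - m) choose nat r)
       * cos (\<epsilon> / 2) ^ nat (m + s + 2 * r)
       * sin (\<epsilon> / 2) ^ nat (- m - s + 2 * (int l - r)))"

definition eps_idx :: "nat \<Rightarrow> real" where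
  "eps_idx m = (if m = 0 then 1 else 2)"

definition y_idx :: "nat \<Rightarrow> real" where
  "y_idx s = (if even s then 0 else 1 / 2)"

definition t_idx :: "nat \<Rightarrow> int" where
  "t_idx l = (int l - 1) mod 2"

definition k2_idx :: "nat \<Rightarrow> nat \<Rightarrow> nat \<Rightarrow> int" where
  "k2_idx l m s = t_idx l * (int m + int s - 1) + 1"

definition k3_idx :: "nat \<Rightarrow> nat \<Rightarrow> nat \<Rightarrow> int" where
  "k3_idx l m s = t_idx l * (int m + int s)"

definition theta_bar :: "elements \<Rightarrow> nat \<Rightarrow> nat \<Rightarrow> nat \<Rightarrow> int \<Rightarrow> real" where
  "theta_bar x l m p j = of_int (int l - 2 * int p) * arg_per x
     + of_int (int l - 2 * int p + j) * mean_anom x + real m * long_node x"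

definition theta'_bar :: "elements \<Rightarrow> nat \<Rightarrow> nat \<Rightarrow> nat \<Rightarrow> int \<Rightarrow> real" where
  "theta'_bar k l s q r = of_int (int l - 2 * int q) * arg_per k
     + of_int (int l - 2 * int q + r) * mean_anom k + real s * (long_node k - pi / 2)"

text \<open>General term of the lunar disturbing function.
  Arguments: G, Moon mass, obliquity, satellite elements, Moon elements, indices.\<close>
definition moon_term :: "real \<Rightarrow> real \<Rightarrow> real \<Rightarrow> elements \<Rightarrow> elements
    \<Rightarrow> nat \<Rightarrow> nat \<Rightarrow> nat \<Rightarrow> nat \<Rightarrow> nat \<Rightarrow> int \<Rightarrow> int \<Rightarrow> real" where
  "moon_term G mk \<epsilon> x k l m p s q j r =
     (-1) ^ (m + s) * (-1) ^ (m div 2)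
     * (G * mk * eps_idx m * eps_idx s / (2 * sm_axis k))
     * (fact (l - s) / fact (l + m)) * (sm_axis x / sm_axis k) ^ l
     * kaula_F l m p (incl x) * kaula_F l s q (incl k)
     * H_fun l p j (ecc x) * G_fun l q r (ecc k)
     * ((-1) powi k2_idx l m s * U_coef l (int m) (- int s) \<epsilon>
          * cos (theta_bar x l m p j + theta'_bar k l s q r - y_idx s * pi)
        + (-1) powi k3_idx l m s * U_coef l (int m) (int s) \<epsilon>
          * cos (theta_bar x l m p j - theta'_bar k l s q r - y_idx s * pi))"

text \<open>Averaged degree-2 lunar part: l = 2, l-2p+j = 0, l-2q+r = 0.\<close>
definition R_moon_bar :: "real \<Rightarrow> real \<Rightarrow> real \<Rightarrow> elements \<Rightarrow> elements \<Rightarrow> real" where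
  "R_moon_bar G mk \<epsilon> x k =
     (\<Sum>m\<in>{0..2}. \<Sum>p\<in>{0..2}. \<Sum>s\<in>{0..2}. \<Sum>q\<in>{0..2}.
        moon_term G mk \<epsilon> x k 2 m p s q (2 * int p - 2) (2 * int q - 2))"

definition phi_sun :: "elements \<Rightarrow> elements \<Rightarrow> nat \<Rightarrow> nat \<Rightarrow> nat \<Rightarrow> nat \<Rightarrow> int \<Rightarrow> int \<Rightarrow> real" where
  "phi_sun x S l m p h q j =
     of_int (int l - 2 * int p) * arg_per x + of_int (int l - 2 * int p + q) * mean_anom x
     - of_int (int l - 2 * int h) * arg_per S - of_int (int l - 2 * int h + j) * mean_anom S
     + real m * (long_node x - long_node S)"

definition sun_term :: "real \<Rightarrow> real \<Rightarrow> elements \<Rightarrow> elements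
    \<Rightarrow> nat \<Rightarrow> nat \<Rightarrow> nat \<Rightarrow> nat \<Rightarrow> int \<Rightarrow> int \<Rightarrow> real" where
  "sun_term G ms x S l m p h q j =
     G * ms * (sm_axis x ^ l / sm_axis S ^ (l + 1)) * eps_idx m
     * (fact (l - m) / fact (l + m))
     * kaula_F l m p (incl x) * kaula_F l m h (incl S)
     * H_fun l p q (ecc x) * G_fun l h j (ecc S)
     * cos (phi_sun x S l m p h q j)"

text \<open>Averaged degree-2 solar part: l = 2, l-2p+q = 0, l-2h+j = 0.\<close>
definition R_sun_bar :: "real \<Rightarrow> real \<Rightarrow> elements \<Rightarrow> elements \<Rightarrow> real" where
  "R_sun_bar G ms x S =
     (\<Sum>m\<in>{0..2}. \<Sum>p\<in>{0..2}. \<Sum>h\<in>{0..2}.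
        sun_term G ms x S 2 m p h (2 * int p - 2) (2 * int h - 2))"

end

theory Submission
  imports Defs
begin

text \<open>For l = 2 the Moon's argument of perigee enters an averaged term only through
  (2 - 2q)\<omega>_k, which vanishes for q = 1. For q = 0 and q = 2 the averaging condition
  forces r = 2q - 2, so the factor G_2qr(e_k) is the Hansen coefficient X_0^{-3,\<plusminus>2}(e_k),
  and this coefficient is zero: substituting M = E - e sin E turns its defining integral into
  the integral over a period of cos 2f (a/r)^2 dE, which has the periodic antiderivative
  sin E cos E (a/r)^2 - (2e/3) sin^3 E (a/r)^3. The solar case is the same with h in place of q.\<close>

definition kepler_map :: "real \<Rightarrow> real \<Rightarrow> real" where
  "kepler_map e E = E - e * sin E"

lemma one_minus_mult_cos_pos:
  fixes e :: real
  assumes "\<bar>e\<bar> < 1"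
  shows "0 < 1 - e * cos E"
proof -
  have "\<bar>e * cos E\<bar> \<le> \<bar>e\<bar>"
    using abs_cos_le_one[of E] by (simp add: abs_mult mult_right_le_one_le)
  then show ?thesis
    using assms by linarith
qed

lemma kepler_map_has_derivative:
  "(kepler_map e has_real_derivative (1 - e * cos E)) (at E within S)"
  unfolding kepler_map_def by (auto intro!: derivative_eq_intros)

lemma kepler_map_zero [simp]: "kepler_map e 0 = 0"
  and kepler_map_two_pi [simp]: "kepler_map e (2*pi) = 2*pi"
  by (simp_all add: kepler_map_def)

lemma continuous_on_kepler_map: "continuous_on S (kepler_map e)"
  unfolding kepler_map_def by (intro continuous_intros)

lemma strict_mono_kepler_map:
  assumes "\<bar>e\<bar> < 1"
  shows "strict_mono (kepler_map e)"
proof (rule strict_monoI)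
  fix a b :: real
  assume "a < b"
  then show "kepler_map e a < kepler_map e b"
  proof (rule DERIV_pos_imp_increasing)
    fix x
    show "\<exists>y. DERIV (kepler_map e) x :> y \<and> 0 < y"
      using kepler_map_has_derivative one_minus_mult_cos_pos[OF assms] by blast
  qed
qed

lemma kepler_map_surj:
  assumes "\<bar>e\<bar> < 1"
  shows "\<exists>E. kepler_map e E = M"
proof -
  have bound: "\<bar>e * sin E\<bar> \<le> 1" for E
    using assms by (simp add: abs_mult mult_le_one)
  have "kepler_map e (M - 1) \<le> M" "M \<le> kepler_map e (M + 1)"
    using bound[of "M - 1"] bound[of "M + 1"] unfolding kepler_map_def by auto
  then show ?thesis
    using IVT'[of "kepler_map e" "M - 1" M "M + 1"] continuous_on_kepler_map by force
qed

lemma kepler_map_kepler_E: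
  assumes "\<bar>e\<bar> < 1"
  shows "kepler_map e (kepler_E e M) = M"
proof -
  have "\<exists>!E. kepler_map e E = M"
    using kepler_map_surj[OF assms] strict_mono_eq[OF strict_mono_kepler_map[OF assms]] by metis
  then show ?thesis
    unfolding kepler_E_def kepler_map_def[symmetric] by (rule theI')
qed

lemma kepler_E_kepler_map:
  assumes "\<bar>e\<bar> < 1"
  shows "kepler_E e (kepler_map e E) = E"
  using kepler_map_kepler_E[OF assms] strict_mono_eq[OF strict_mono_kepler_map[OF assms]] by metis

lemma kepler_map_mem_period_iff:
  assumes "\<bar>e\<bar> < 1"
  shows "kepler_map e E \<in> {0..2*pi} \<longleftrightarrow> E \<in> {0..2*pi}"
proof -
  have le_iff: "kepler_map e a \<le> kepler_map e b \<longleftrightarrow> a \<le> b" for a b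
    using strict_mono_less_eq[OF strict_mono_kepler_map[OF assms]] .
  show ?thesis
    using le_iff[of 0 E] le_iff[of E "2*pi"] by simp
qed

lemma kepler_E_mem_period:
  assumes "\<bar>e\<bar> < 1" "M \<in> {0..2*pi}"
  shows "kepler_E e M \<in> {0..2*pi}"
  using kepler_map_mem_period_iff[OF assms(1), of "kepler_E e M"] assms(2)
  by (simp add: kepler_map_kepler_E[OF assms(1)])

lemma kepler_map_image_period:
  assumes "\<bar>e\<bar> < 1"
  shows "kepler_map e ` {0..2*pi} = {0..2*pi}"
proof (intro equalityI subsetI)
  fix M :: real
  assume "M \<in> kepler_map e ` {0..2*pi}"
  then show "M \<in> {0..2*pi}"
    using kepler_map_mem_period_iff[OF assms] by blast
next
  fix M :: real
  assume "M \<in> {0..2*pi}"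
  then show "M \<in> kepler_map e ` {0..2*pi}"
    by (rule rev_image_eqI[OF kepler_E_mem_period[OF assms]]) (simp add: kepler_map_kepler_E[OF assms])
qed

lemma continuous_on_kepler_E:
  assumes "\<bar>e\<bar> < 1"
  shows "continuous_on {0..2*pi} (kepler_E e)"
proof -
  have "continuous_on (kepler_map e ` {0..2*pi}) (kepler_E e)"
    by (rule continuous_on_inv[OF continuous_on_kepler_map compact_Icc])
       (simp add: kepler_E_kepler_map[OF assms])
  then show ?thesis
    by (simp add: kepler_map_image_period[OF assms])
qed

lemma integral_kepler_E_substitution:
  fixes f :: "real \<Rightarrow> real"
  assumes e: "\<bar>e\<bar> < 1" and f: "continuous_on {0..2*pi} f"
  shows "((\<lambda>M. f (kepler_E e M)) has_integral integral {0..2*pi} (\<lambda>E. (1 - e * cos E) * f E))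
           {0..2*pi}"
proof -
  have cont: "continuous_on {0..2*pi} (f \<circ> kepler_E e)"
    using continuous_on_compose[OF continuous_on_kepler_E[OF e]] kepler_E_mem_period[OF e]
      continuous_on_subset[OF f] by (metis image_subsetI)
  have "((\<lambda>E. (1 - e * cos E) *\<^sub>R (f \<circ> kepler_E e) (kepler_map e E)) has_integral
          integral {kepler_map e 0..kepler_map e (2*pi)} (f \<circ> kepler_E e)) {0..2*pi}"
    by (rule has_integral_substitution[OF _ _ _ cont])
       (auto simp: kepler_map_image_period[OF e] intro: kepler_map_has_derivative)
  then have "((\<lambda>E. (1 - e * cos E) * f E) has_integral integral {0..2*pi} (f \<circ> kepler_E e))
               {0..2*pi}"
    by (simp add: kepler_E_kepler_map[OF e])
  then have "integral {0..2*pi} (\<lambda>E. (1 - e * cos E) * f E) = integral {0..2*pi} (f \<circ> kepler_E e)"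
    by (rule integral_unique)
  with integrable_continuous_interval[OF cont] show ?thesis
    by (simp add: o_def integrable_integral)
qed

lemma r_over_a_pos:
  assumes "\<bar>e\<bar> < 1"
  shows "0 < r_over_a e M"
  unfolding r_over_a_def using one_minus_mult_cos_pos[OF assms] .

lemma cos_true_anom:
  assumes "\<bar>e\<bar> < 1"
  shows "cos (true_anom e M) = (cos (kepler_E e M) - e) / r_over_a e M"
proof -
  define E where "E = kepler_E e M"
  define z where "z = Complex (cos E - e) (sqrt (1 - e\<^sup>2) * sin E)"
  have e2: "0 \<le> 1 - e\<^sup>2"
    using assms by (simp add: abs_square_le_1)
  have "(cmod z)\<^sup>2 = (cos E - e)\<^sup>2 + (1 - e\<^sup>2) * (sin E)\<^sup>2"
    unfolding z_def cmod_power2 using e2 by (simp add: power_mult_distrib)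
  also have "\<dots> = (r_over_a e M)\<^sup>2"
    unfolding r_over_a_def E_def[symmetric] using sin_squared_eq[of E] by algebra
  finally have norm_z: "cmod z = r_over_a e M"
    using r_over_a_pos[OF assms] by (metis norm_ge_zero power2_eq_imp_eq less_imp_le)
  then have "z \<noteq> 0"
    using r_over_a_pos[OF assms, of M] by (metis norm_zero less_irrefl)
  then have "cos (Arg z) = Re z / cmod z"
    using arg_cong[OF cis_Arg, of z Re] by (simp add: sgn_div_norm divide_inverse mult.commute)
  moreover have "true_anom e M = Arg z"
    unfolding true_anom_def z_def E_def ..
  moreover have "Re z = cos (kepler_E e M) - e"
    unfolding z_def E_def by simp
  ultimately show ?thesis
    by (simp add: norm_z)
qed

text \<open>The integrand is cos 2f (a/r)^2 written in terms of the eccentric anomaly E.\<close>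
lemma cos_2f_over_r_squared_integral_zero:
  fixes e :: real
  assumes "\<bar>e\<bar> < 1"
  shows "((\<lambda>E. (2 * (cos E - e)\<^sup>2 / (1 - e * cos E)\<^sup>2 - 1) / (1 - e * cos E)\<^sup>2) has_integral 0)
           {0..2*pi}"
proof -
  define A where "A E = sin E * cos E / (1 - e * cos E)\<^sup>2 - 2 * e / 3 * sin E ^ 3 / (1 - e * cos E) ^ 3"
    for E
  have deriv: "(A has_real_derivative
                 (2 * (cos E - e)\<^sup>2 / (1 - e * cos E)\<^sup>2 - 1) / (1 - e * cos E)\<^sup>2) (at E within S)"
    for E S
  proof -
    have D: "1 - e * cos E \<noteq> 0"
      using one_minus_mult_cos_pos[OF assms, of E] by simp
    show ?thesis
      unfolding A_def
      by (rule DERIV_cong, (rule derivative_eq_intros refl | use D in force)+)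
         (use D sin_cos_squared_add[of E] in \<open>simp add: field_simps, algebra\<close>)
  qed
  have "((\<lambda>E. (2 * (cos E - e)\<^sup>2 / (1 - e * cos E)\<^sup>2 - 1) / (1 - e * cos E)\<^sup>2) has_integral
          A (2*pi) - A 0) {0..2*pi}"
    by (rule fundamental_theorem_of_calculus)
       (auto simp: has_real_derivative_iff_has_vector_derivative[symmetric] intro: deriv)
  then show ?thesis
    by (simp add: A_def)
qed

lemma hansen_minus_3_pm2_0:
  fixes e :: real
  assumes e: "\<bar>e\<bar> < 1" and m: "\<bar>m\<bar> = 2"
  shows "hansen (-3) m 0 e = 0"
proof -
  define c where "c E = (2 * (cos E - e)\<^sup>2 / (1 - e * cos E)\<^sup>2 - 1) / (1 - e * cos E) ^ 3" for E
  define \<phi> where "\<phi> M = complex_of_real (r_over_a e M powi (-3)) * cis (of_int m * true_anom e M)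
                        * cis (- (of_int 0 * M))" for M
  have Re_\<phi>: "Re (\<phi> M) = c (kepler_E e M)" for M
  proof -
    have "m = 2 \<or> m = -2"
      using m by auto
    then have cos_2f: "cos (of_int m * true_anom e M) = 2 * (cos (true_anom e M))\<^sup>2 - 1"
      using cos_double_cos[of "true_anom e M"] by (auto simp: mult_minus_left)
    have "Re (\<phi> M) = r_over_a e M powi (-3) * cos (of_int m * true_anom e M)"
      by (simp add: \<phi>_def del: of_real_power_int)
    also have "\<dots> = cos (of_int m * true_anom e M) / r_over_a e M ^ 3"
      by (simp add: power_int_minus divide_inverse)
    also have "\<dots> = c (kepler_E e M)"
      by (simp add: cos_2f c_def cos_true_anom[OF e] power_divide r_over_a_def)
    finally show ?thesis .
  qed
  have cont: "continuous_on {0..2*pi} c"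
    unfolding c_def using one_minus_mult_cos_pos[OF e]
    by (intro continuous_intros) (auto simp: less_imp_neq[symmetric] dest: sym)
  have "(1 - e * cos E) * c E = (2 * (cos E - e)\<^sup>2 / (1 - e * cos E)\<^sup>2 - 1) / (1 - e * cos E)\<^sup>2" for E
    using one_minus_mult_cos_pos[OF e, of E] by (simp add: c_def power3_eq_cube power2_eq_square)
  then have "((\<lambda>M. Re (\<phi> M)) has_integral 0) {0..2*pi}"
    using integral_kepler_E_substitution[OF e cont] cos_2f_over_r_squared_integral_zero[OF e]
    by (simp add: Re_\<phi> integral_unique)
  then have "Re (integral {0..2*pi} \<phi>) = 0"
    using has_integral_Re[OF integrable_integral] has_integral_unique not_integrable_integral
    by (metis zero_complex.simps(1))
  then show ?thesis
    unfolding hansen_def \<phi>_def[abs_def, symmetric] by (simp add: Re_divide)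
qed

lemma G_fun_2_averaged_zero:
  fixes e :: real
  assumes "\<bar>e\<bar> < 1" "q \<in> {0, 2}"
  shows "G_fun 2 q (2 * int q - 2) e = 0"
proof -
  have "G_fun 2 q (2 * int q - 2) e = hansen (-3) (2 - 2 * int q) 0 e"
    by (simp add: G_fun_def)
  also have "\<dots> = 0"
    using assms(2) by (intro hansen_minus_3_pm2_0[OF assms(1)]) auto
  finally show ?thesis .
qed

lemma moon_term_averaged_indep_arg_per:
  assumes "\<bar>ecc k\<bar> < 1" "q \<le> 2"
  shows "moon_term G mk \<epsilon> x (k\<lparr>arg_per := w\<rparr>) 2 m p s q (2 * int p - 2) (2 * int q - 2)
       = moon_term G mk \<epsilon> x (k\<lparr>arg_per := w'\<rparr>) 2 m p s q (2 * int p - 2) (2 * int q - 2)"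
proof (cases "q = 1")
  case True
  then show ?thesis
    by (simp add: moon_term_def theta'_bar_def)
next
  case False
  with assms(2) have "q \<in> {0, 2}"
    by auto
  then show ?thesis
    using G_fun_2_averaged_zero[OF assms(1)] by (simp add: moon_term_def)
qed

lemma sun_term_averaged_indep_arg_per:
  assumes "\<bar>ecc S\<bar> < 1" "h \<le> 2"
  shows "sun_term G ms x (S\<lparr>arg_per := w\<rparr>) 2 m p h (2 * int p - 2) (2 * int h - 2)
       = sun_term G ms x (S\<lparr>arg_per := w'\<rparr>) 2 m p h (2 * int p - 2) (2 * int h - 2)"
proof (cases "h = 1")
  case True
  then show ?thesis
    by (simp add: sun_term_def phi_sun_def)
next
  case False
  with assms(2) have "h \<in> {0, 2}"
    by auto
  then show ?thesis
    using G_fun_2_averaged_zero[OF assms(1)] by (simp add: sun_term_def)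
qed

theorem proposition2:
  fixes G mk ms \<epsilon> w w' :: real and x k S :: elements
  assumes "0 \<le> ecc k" "ecc k < 1"
      and "0 \<le> ecc S" "ecc S < 1"
  shows "R_moon_bar G mk \<epsilon> x (k\<lparr>arg_per := w\<rparr>) = R_moon_bar G mk \<epsilon> x (k\<lparr>arg_per := w'\<rparr>)
       \<and> R_sun_bar G ms x (S\<lparr>arg_per := w\<rparr>) = R_sun_bar G ms x (S\<lparr>arg_per := w'\<rparr>)"
proof
  have "\<bar>ecc k\<bar> < 1" "\<bar>ecc S\<bar> < 1"
    using assms by auto
  then show "R_moon_bar G mk \<epsilon> x (k\<lparr>arg_per := w\<rparr>) = R_moon_bar G mk \<epsilon> x (k\<lparr>arg_per := w'\<rparr>)"
    and "R_sun_bar G ms x (S\<lparr>arg_per := w\<rparr>) = R_sun_bar G ms x (S\<lparr>arg_per := w'\<rparr>)"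
    unfolding R_moon_bar_def R_sun_bar_def
    by (auto intro!: sum.cong moon_term_averaged_indep_arg_per sun_term_averaged_indep_arg_per)
qed

end
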